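(* Let $\mathcal{A}$ be a finite alphabet and $\mathcal{F}$ the free group over $\mathcal{A}$. Let $S \subseteq \mathcal{F}$ be product-free, i.e. there are no $x,y,z \in S$ (not necessarily distinct) with $z = x\cdot y$. Then $\bar{d}(S) \leq \frac{1}{2}$.
   Context: Every element $w\in\mathcal{F}$ is identified with its reduced word, and $|w|$ denotes the length of the reduced word. For $A\subseteq \mathcal{F}$ and $n\ge 1$, $A(n)=\{w\in A: |w|=n\}$ and $A_{\le n}=\{w\in A: |w|\le n\}$. The measure $\mu$ on $\mathcal{F}$ is defined by $\mu(\{w\}) = 1/|\mathcal{F}(|w|)| = \frac{1}{2|\mathcal{A}|(2|\mathcal{A}|-1)^{|w|-1}}$, so that each layer of words of a given length has total weight one. The upper asymptotic density is $\bar{d}(A)=\limsup_{n\to\infty}\frac{\mu(A_{\le n})}{\mu(\mathcal{F}_{\le n})}$. *)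

theory Defs
  imports "HOL-Analysis.Analysis"
begin

text \<open>Elements of the free group over an alphabet A (of type 'a) are represented by
their reduced words: lists of letters (a, b) with a \<in> A, where b = True means the
generator a and b = False its inverse, with no two adjacent mutually inverse letters.\<close>

definition inv_letter :: "'a \<times> bool \<Rightarrow> 'a \<times> bool" where
  "inv_letter x = (fst x, \<not> snd x)"

fun reduced :: "('a \<times> bool) list \<Rightarrow> bool" where
  "reduced [] = True"
| "reduced [x] = True"
| "reduced (x # y # ys) = (y \<noteq> inv_letter x \<and> reduced (y # ys))"

definition free_group :: "'a set \<Rightarrow> ('a \<times> bool) list set" where
  "free_group A = {w. set w \<subseteq> A \<times> UNIV \<and> reduced w}"

text \<open>Cancellation of a reversed left factor against a right factor.\<close>
fun cancel :: "('a \<times> bool) list \<Rightarrow> ('a \<times> bool) list \<Rightarrow> ('a \<times> bool) list" where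
  "cancel [] ys = ys"
| "cancel (x # rx) [] = rev (x # rx)"
| "cancel (x # rx) (y # ys) =
     (if y = inv_letter x then cancel rx ys else rev (x # rx) @ y # ys)"

definition wmul :: "('a \<times> bool) list \<Rightarrow> ('a \<times> bool) list \<Rightarrow> ('a \<times> bool) list" where
  "wmul xs ys = cancel (rev xs) ys"

definition product_free :: "('a \<times> bool) list set \<Rightarrow> bool" where
  "product_free S \<longleftrightarrow> (\<forall>x\<in>S. \<forall>y\<in>S. \<forall>z\<in>S. z \<noteq> wmul x y)"

definition layer :: "'a set \<Rightarrow> nat \<Rightarrow> ('a \<times> bool) list set" where
  "layer A n = {w \<in> free_group A. length w = n}"

definition mu_le :: "'a set \<Rightarrow> ('a \<times> bool) list set \<Rightarrow> nat \<Rightarrow> real" where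
  "mu_le A B n = (\<Sum>w\<in>{w \<in> B. length w \<le> n}. 1 / real (card (layer A (length w))))"

definition upper_density :: "'a set \<Rightarrow> ('a \<times> bool) list set \<Rightarrow> ereal" where
  "upper_density A B =
     limsup (\<lambda>n. ereal (mu_le A B n / mu_le A (free_group A) n))"

end

theory Submission
  imports Defs
begin

text \<open>
  Let g be a uniformly random word of n letters from A and its inverses, and consider the random
  walk t \<mapsto> reduce (take t g) in the free group. Call t \<le> n a hit if the walk is in S at time t.
  If J is the first hit, the walk restarted at time J is an independent copy of the walk, and by
  product-freeness J + s is not a hit of the original walk whenever s is a hit of the copy:
  otherwise the position at time J + s would be the product of the positions at J and of the copy
  at s. Hence the hits of both walks after J are disjoint subsets of {J + 1..J + n}, and the
  expected number of hits is at most (n + 1)/2.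

  On the other hand the walk is uniformly distributed on each sphere, so the expected number of
  hits is the sum over l of the expected number of visits of the length of the walk to l, times the
  density of S on the sphere of radius l. For N = 2|A| \<ge> 4 the length is a birth-death chain
  escaping at speed (N - 2)/N: it visits each radius at most about N/(N - 2) times, and after
  n \<approx> (1 - \<epsilon>) L N/(N - 2) steps it is still in the ball of radius L except with exponentially small
  probability. Comparing the two counts bounds the average density of S on the spheres of radius
  at most L by (1 + \<epsilon>)/2 + O(1/L). For |A| = 1 the first argument, applied to the two words
  a^l and a^-l, gives the bound 1/2 directly.
\<close>

section \<open>Free reduction\<close>

lemma inv_letter_inv [simp]: "inv_letter (inv_letter x) = x"
  by (simp add: inv_letter_def)

lemma inv_letter_neq [simp]: "inv_letter x \<noteq> x"
  by (cases x) (simp add: inv_letter_def)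

lemma inv_letter_eq_iff: "inv_letter x = y \<longleftrightarrow> x = inv_letter y"
  by (auto simp: inv_letter_def)

lemma reduced_Cons: "reduced (x # ys) \<longleftrightarrow> reduced ys \<and> (ys \<noteq> [] \<longrightarrow> hd ys \<noteq> inv_letter x)"
  by (cases ys) auto

lemma reduced_append:
  "reduced (u @ v) \<longleftrightarrow>
    reduced u \<and> reduced v \<and> (u \<noteq> [] \<and> v \<noteq> [] \<longrightarrow> hd v \<noteq> inv_letter (last u))"
proof (induction u)
  case (Cons x u)
  then show ?case
    by (cases u) (auto simp: reduced_Cons)
qed simp

lemma reduced_replicate: "reduced (replicate l x)"
proof (induction l)
  case (Suc l)
  then show ?case
    by (cases l) (auto simp: inv_letter_eq_iff[symmetric])
qed simp

definition append_letter :: "('a \<times> bool) list \<Rightarrow> 'a \<times> bool \<Rightarrow> ('a \<times> bool) list" where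
  "append_letter w a = (if w \<noteq> [] \<and> last w = inv_letter a then butlast w else w @ [a])"

lemma reduced_append_letter:
  assumes "reduced w"
  shows "reduced (append_letter w a)"
proof (cases "w \<noteq> [] \<and> last w = inv_letter a")
  case True
  then have "w = butlast w @ [inv_letter a]"
    by (metis append_butlast_last_id)
  then have "reduced (butlast w)"
    using assms by (metis reduced_append)
  then show ?thesis
    using True by (simp add: append_letter_def)
qed (use assms in \<open>auto simp: append_letter_def reduced_append inv_letter_eq_iff\<close>)

lemma append_letter_inv:
  assumes "reduced w"
  shows "append_letter (append_letter w a) (inv_letter a) = w"
proof (cases "w \<noteq> [] \<and> last w = inv_letter a")
  case True
  define w' where "w' = butlast w"
  have w: "w = w' @ [inv_letter a]"
    using True unfolding w'_def by (metis append_butlast_last_id)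
  have "\<not> (w' \<noteq> [] \<and> last w' = a)"
    using assms w by (auto simp: reduced_append)
  then show ?thesis
    using True w by (auto simp: append_letter_def w'_def[symmetric])
qed (auto simp: append_letter_def)

lemma append_letter_eq_iff:
  "reduced r \<Longrightarrow> reduced w \<Longrightarrow> append_letter r a = w \<longleftrightarrow> r = append_letter w (inv_letter a)"
  using append_letter_inv[of r a] append_letter_inv[of w "inv_letter a"] by auto

lemma length_append_letter:
  "length (append_letter w a) =
    (if w \<noteq> [] \<and> last w = inv_letter a then length w - 1 else length w + 1)"
  by (simp add: append_letter_def)

lemma set_append_letter: "set (append_letter w a) \<subseteq> insert a (set w)"
  by (auto simp: append_letter_def dest: in_set_butlastD)

definition reduce :: "('a \<times> bool) list \<Rightarrow> ('a \<times> bool) list" where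
  "reduce g = foldl append_letter [] g"

lemma reduce_Nil [simp]: "reduce [] = []"
  by (simp add: reduce_def)

lemma reduce_snoc: "reduce (g @ [a]) = append_letter (reduce g) a"
  by (simp add: reduce_def)

lemma reduced_foldl_append_letter: "reduced x \<Longrightarrow> reduced (foldl append_letter x h)"
  by (induction h arbitrary: x) (auto simp: reduced_append_letter)

lemma reduced_reduce: "reduced (reduce g)"
  unfolding reduce_def by (rule reduced_foldl_append_letter) simp

lemma set_reduce: "set (reduce g) \<subseteq> set g"
proof (induction g rule: rev_induct)
  case (snoc a g)
  then show ?case
    using set_append_letter[of "reduce g" a] by (auto simp: reduce_snoc)
qed simp

lemma length_reduce_le: "length (reduce g) \<le> length g"
  by (induction g rule: rev_induct) (auto simp: reduce_snoc length_append_letter)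

lemma foldl_append_letter_reduced:
  "reduced (u @ v) \<Longrightarrow> foldl append_letter u v = u @ v"
proof (induction v arbitrary: u)
  case (Cons b v)
  then have "append_letter u b = u @ [b]"
    by (auto simp: append_letter_def reduced_append inv_letter_eq_iff)
  then show ?case
    using Cons by simp
qed simp

lemma reduce_reduced: "reduced w \<Longrightarrow> reduce w = w"
  using foldl_append_letter_reduced[of "[]" w] by (simp add: reduce_def)

lemma foldl_append_letter_append_letter:
  assumes "reduced x"
  shows "foldl append_letter x (append_letter r a) = append_letter (foldl append_letter x r) a"
proof (cases "r \<noteq> [] \<and> last r = inv_letter a")
  case True
  then have r: "r = butlast r @ [inv_letter a]"
    by (metis append_butlast_last_id)
  have "foldl append_letter x r = append_letter (foldl append_letter x (butlast r)) (inv_letter a)"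
    by (subst r) simp
  then have "append_letter (foldl append_letter x r) a = foldl append_letter x (butlast r)"
    using append_letter_inv[OF reduced_foldl_append_letter[OF assms], of "butlast r" "inv_letter a"]
    by simp
  then show ?thesis
    using True by (simp add: append_letter_def)
qed (auto simp: append_letter_def)

lemma foldl_append_letter_reduce:
  "reduced x \<Longrightarrow> foldl append_letter x h = foldl append_letter x (reduce h)"
  by (induction h rule: rev_induct)
    (simp_all add: reduce_snoc foldl_append_letter_append_letter reduced_reduce)

lemma wmul_eq_foldl: "reduced x \<Longrightarrow> reduced y \<Longrightarrow> wmul x y = foldl append_letter x y"
proof (induction y arbitrary: x)
  case Nil
  then show ?case
    by (cases "rev x") (auto simp: wmul_def)
next
  case (Cons b y)
  show ?case
  proof (cases x rule: rev_cases)
    case Nil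
    then show ?thesis
      using Cons.prems foldl_append_letter_reduced[of "[]" "b # y"] by (simp add: wmul_def)
  next
    case (snoc x' c)
    have y: "reduced y"
      using Cons.prems(2) by (simp add: reduced_Cons)
    show ?thesis
    proof (cases "b = inv_letter c")
      case True
      then show ?thesis
        using Cons.prems(1) snoc Cons.IH[of x'] y
        by (simp add: wmul_def append_letter_def reduced_append)
    next
      case False
      then have "reduced (x @ b # y)"
        using Cons.prems snoc by (simp add: reduced_append inv_letter_eq_iff)
      moreover have "append_letter x b = x @ [b]"
        using False snoc by (auto simp: append_letter_def inv_letter_eq_iff)
      ultimately show ?thesis
        using False snoc foldl_append_letter_reduced[of "x @ [b]" y] by (simp add: wmul_def)
    qed
  qed
qed

lemma reduce_append: "reduce (u @ v) = wmul (reduce u) (reduce v)"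
proof -
  have "reduce (u @ v) = foldl append_letter (reduce u) v"
    by (simp add: reduce_def)
  also have "\<dots> = foldl append_letter (reduce u) (reduce v)"
    by (rule foldl_append_letter_reduce[OF reduced_reduce])
  finally show ?thesis
    by (simp add: wmul_eq_foldl reduced_reduce)
qed

definition letters :: "'a set \<Rightarrow> ('a \<times> bool) set" where
  "letters A = A \<times> UNIV"

definition num_letters :: "'a set \<Rightarrow> real" where
  "num_letters A = real (card (letters A))"

lemma finite_letters [simp]: "finite A \<Longrightarrow> finite (letters A)"
  by (simp add: letters_def)

lemma num_letters_eq: "finite A \<Longrightarrow> num_letters A = 2 * real (card A)"
  by (simp add: num_letters_def letters_def card_cartesian_product)

lemma num_letters_pos: "finite A \<Longrightarrow> A \<noteq> {} \<Longrightarrow> 0 < num_letters A"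
  by (simp add: num_letters_eq card_gt_0_iff)

lemma num_letters_ge_4: "finite A \<Longrightarrow> 2 \<le> card A \<Longrightarrow> 4 \<le> num_letters A"
  by (simp add: num_letters_eq)

lemma inv_letter_in_letters: "a \<in> letters A \<Longrightarrow> inv_letter a \<in> letters A"
  by (auto simp: inv_letter_def letters_def)

lemma reduce_in_free_group: "set g \<subseteq> letters A \<Longrightarrow> reduce g \<in> free_group A"
  using set_reduce[of g] reduced_reduce[of g] by (auto simp: free_group_def letters_def)

lemma append_letter_in_free_group:
  "w \<in> free_group A \<Longrightarrow> a \<in> letters A \<Longrightarrow> append_letter w a \<in> free_group A"
  using set_append_letter[of w a] reduced_append_letter[of w a]
  by (auto simp: free_group_def letters_def)

lemma Nil_notin_product_free: "product_free S \<Longrightarrow> [] \<notin> S"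
  unfolding product_free_def by (metis cancel.simps(1) rev.simps(1) wmul_def)

definition words :: "'b set \<Rightarrow> nat \<Rightarrow> 'b list set" where
  "words L n = {g. set g \<subseteq> L \<and> length g = n}"

lemma finite_words: "finite L \<Longrightarrow> finite (words L n)"
  unfolding words_def by (rule finite_lists_length_eq)

lemma card_words: "finite L \<Longrightarrow> card (words L n) = card L ^ n"
  unfolding words_def by (rule card_lists_length_eq)

lemma words_0 [simp]: "words L 0 = {[]}"
  by (auto simp: words_def)

lemma sum_words_add:
  assumes "finite L"
  shows "(\<Sum>g\<in>words L (m + n). F g) = (\<Sum>u\<in>words L m. \<Sum>v\<in>words L n. F (u @ v))"
proof -
  have "(\<Sum>g\<in>words L (m + n). F g) = (\<Sum>(u, v)\<in>words L m \<times> words L n. F (u @ v))"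
    by (rule sum.reindex_bij_witness[where i = "\<lambda>(u, v). u @ v" and j = "\<lambda>g. (take m g, drop m g)"])
      (auto simp: words_def dest: in_set_takeD in_set_dropD)
  then show ?thesis
    by (simp add: sum.cartesian_product)
qed

lemma sum_words_Suc:
  assumes "finite L"
  shows "(\<Sum>g\<in>words L (Suc n). F g) = (\<Sum>u\<in>words L n. \<Sum>a\<in>L. F (u @ [a]))"
proof -
  have "words L 1 = (\<lambda>a. [a]) ` L"
    by (auto simp: words_def length_Suc_conv)
  then have "(\<Sum>v\<in>words L 1. F (u @ v)) = (\<Sum>a\<in>L. F (u @ [a]))" for u
    by (simp add: sum.reindex inj_on_def)
  then show ?thesis
    using sum_words_add[OF assms, of F n 1] by simp
qed

lemma sum_words_take:
  fixes F :: "'b list \<Rightarrow> real"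
  assumes "finite L"
  shows "(\<Sum>g\<in>words L (n + m). F (take n g)) = real (card L) ^ m * (\<Sum>u\<in>words L n. F u)"
proof -
  have "(\<Sum>g\<in>words L (n + m). F (take n g)) = (\<Sum>u\<in>words L n. \<Sum>v\<in>words L m. F u)"
    unfolding sum_words_add[OF assms] by (intro sum.cong refl) (simp add: words_def)
  then show ?thesis
    by (simp add: card_words[OF assms] sum_distrib_left)
qed

section \<open>Visits of the random walk to a product-free set\<close>

text \<open>Probabilities are modelled by counting: the random walk of n steps is a word g ranging
  uniformly over words (letters A) n, and its position at time t is reduce (take t g).\<close>

definition hit_times :: "('a \<times> bool) list set \<Rightarrow> nat \<Rightarrow> ('a \<times> bool) list \<Rightarrow> nat set" where
  "hit_times S n g = {t \<in> {1..n}. reduce (take t g) \<in> S}"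

lemma finite_hit_times [simp]: "finite (hit_times S n g)"
  by (simp add: hit_times_def)

lemma hit_times_take: "hit_times S n (take n g) = hit_times S n g"
  by (auto simp: hit_times_def min_def)

lemma hit_times_restart_disjoint:
  assumes "product_free S" "j \<in> hit_times S n g" "s \<in> hit_times S n (drop j g)"
  shows "j + s \<notin> hit_times S n g"
proof
  assume "j + s \<in> hit_times S n g"
  moreover have "reduce (take (j + s) g) = wmul (reduce (take j g)) (reduce (take s (drop j g)))"
    by (simp add: take_add reduce_append)
  ultimately show False
    using assms unfolding product_free_def hit_times_def by auto
qed

lemma card_hit_times_restart_le:
  assumes "product_free S" and "hit_times S n g \<noteq> {}"
  defines "J \<equiv> Min (hit_times S n g)"
  shows "card (hit_times S n g) + card (hit_times S n (drop J g)) \<le> n + 1"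
proof -
  let ?H = "hit_times S n g" and ?H' = "hit_times S n (drop J g)"
  have J: "J \<in> ?H" "\<And>t. t \<in> ?H \<Longrightarrow> J \<le> t"
    using assms(2) by (simp_all add: J_def)
  have sub: "?H - {J} \<subseteq> {J<..J + n}" "(+) J ` ?H' \<subseteq> {J<..J + n}"
    using J by (fastforce simp: hit_times_def)+
  have "(?H - {J}) \<inter> (+) J ` ?H' = {}"
    using hit_times_restart_disjoint[OF assms(1) J(1)] by auto
  then have "card (?H - {J}) + card ((+) J ` ?H') = card ((?H - {J}) \<union> (+) J ` ?H')"
    by (simp add: card_Un_disjoint)
  also have "\<dots> \<le> card {J<..J + n}"
    by (intro card_mono finite_greaterThanAtMost Un_least sub)
  finally have "card (?H - {J}) + card ((+) J ` ?H') \<le> n"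
    by simp
  moreover have "card ((+) J ` ?H') = card ?H'"
    by (simp add: card_image)
  moreover have "card (?H - {J}) + 1 = card ?H"
    using J(1) card_Suc_Diff1[of ?H J] by simp
  ultimately show ?thesis
    by simp
qed

definition first_hit_at :: "('a \<times> bool) list set \<Rightarrow> nat \<Rightarrow> ('a \<times> bool) list \<Rightarrow> bool" where
  "first_hit_at S j u \<longleftrightarrow> reduce u \<in> S \<and> (\<forall>t\<in>{1..<j}. reduce (take t u) \<notin> S)"

lemma Min_hit_times_eq_iff:
  assumes "length u = j" "j \<in> {1..n}"
  shows "hit_times S n (u @ v) \<noteq> {} \<and> Min (hit_times S n (u @ v)) = j \<longleftrightarrow> first_hit_at S j u"
proof -
  have "hit_times S n (u @ v) \<noteq> {} \<and> Min (hit_times S n (u @ v)) = j \<longleftrightarrow>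
      j \<in> hit_times S n (u @ v) \<and> (\<forall>t \<in> hit_times S n (u @ v). j \<le> t)"
    by (cases "hit_times S n (u @ v) = {}") (simp_all add: Min_eq_iff)
  also have "\<dots> \<longleftrightarrow> first_hit_at S j u"
  proof -
    have hit: "t \<in> hit_times S n (u @ v) \<longleftrightarrow> 1 \<le> t \<and> t \<le> n \<and> reduce (take t u) \<in> S"
      if "t \<le> j" for t
      using that assms(1) by (simp add: hit_times_def)
    have "(\<forall>t \<in> hit_times S n (u @ v). j \<le> t) \<longleftrightarrow> (\<forall>t\<in>{1..<j}. reduce (take t u) \<notin> S)"
    proof
      assume all: "\<forall>t \<in> hit_times S n (u @ v). j \<le> t"
      show "\<forall>t\<in>{1..<j}. reduce (take t u) \<notin> S"
      proof (intro ballI notI)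
        fix t
        assume t: "t \<in> {1..<j}" "reduce (take t u) \<in> S"
        then have "t \<in> hit_times S n (u @ v)"
          using hit[of t] assms(2) by simp
        then show False
          using all t(1) by auto
      qed
    next
      assume first: "\<forall>t\<in>{1..<j}. reduce (take t u) \<notin> S"
      show "\<forall>t \<in> hit_times S n (u @ v). j \<le> t"
      proof (rule ballI, rule ccontr)
        fix t
        assume "t \<in> hit_times S n (u @ v)" "\<not> j \<le> t"
        then show False
          using first hit[of t] by auto
      qed
    qed
    then show ?thesis
      using hit[of j] assms by (auto simp: first_hit_at_def)
  qed
  finally show ?thesis .
qed

lemma sum_words_first_hit:
  fixes F :: "nat \<Rightarrow> ('a \<times> bool) list \<Rightarrow> real"
  assumes "finite L" "n \<le> m"
  shows "(\<Sum>g\<in>words L m. if hit_times S n g \<noteq> {}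
            then F (Min (hit_times S n g)) (drop (Min (hit_times S n g)) g) else 0)
       = (\<Sum>j\<in>{1..n}. \<Sum>u\<in>words L j. if first_hit_at S j u then (\<Sum>v\<in>words L (m - j). F j v) else 0)"
proof -
  have split: "(if hit_times S n g \<noteq> {}
        then F (Min (hit_times S n g)) (drop (Min (hit_times S n g)) g) else 0)
      = (\<Sum>j\<in>{1..n}. if hit_times S n g \<noteq> {} \<and> Min (hit_times S n g) = j then F j (drop j g) else 0)"
    for g
  proof (cases "hit_times S n g = {}")
    case False
    then have "Min (hit_times S n g) \<in> {1..n}"
      using Min_in[of "hit_times S n g"] by (auto simp: hit_times_def)
    then show ?thesis
      using False by (simp add: sum.delta[OF finite_atLeastAtMost] cong: if_cong)
  qed simp
  have first_hit: "(\<Sum>g\<in>words L m.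
        if hit_times S n g \<noteq> {} \<and> Min (hit_times S n g) = j then F j (drop j g) else 0)
      = (\<Sum>u\<in>words L j. if first_hit_at S j u then (\<Sum>v\<in>words L (m - j). F j v) else 0)"
    if j: "j \<in> {1..n}" for j
  proof -
    define k where "k = m - j"
    have m: "m = j + k"
      using j assms(2) by (simp add: k_def)
    have "(\<Sum>g\<in>words L m.
          if hit_times S n g \<noteq> {} \<and> Min (hit_times S n g) = j then F j (drop j g) else 0)
        = (\<Sum>u\<in>words L j. \<Sum>v\<in>words L k.
             if hit_times S n (u @ v) \<noteq> {} \<and> Min (hit_times S n (u @ v)) = j
             then F j (drop j (u @ v)) else 0)"
      unfolding m by (rule sum_words_add[OF assms(1)])
    also have "\<dots> = (\<Sum>u\<in>words L j. \<Sum>v\<in>words L k. if first_hit_at S j u then F j v else 0)"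
      using j by (intro sum.cong refl) (simp add: Min_hit_times_eq_iff words_def)
    also have "\<dots> = (\<Sum>u\<in>words L j. if first_hit_at S j u then (\<Sum>v\<in>words L k. F j v) else 0)"
      by (intro sum.cong refl) auto
    finally show ?thesis
      unfolding k_def .
  qed
  show ?thesis
    unfolding split sum.swap[where A = "words L m"] by (intro sum.cong refl first_hit)
qed

text \<open>The strong Markov property at the first visit: after the first visit the walk starts afresh.\<close>

lemma sum_words_restart:
  fixes F :: "('a \<times> bool) list \<Rightarrow> real"
  assumes "finite L" and F: "\<And>v. F (take n v) = F v"
  shows "(\<Sum>g\<in>words L (n + n).
            if hit_times S n g \<noteq> {} then F (drop (Min (hit_times S n g)) g) else 0)
       = real (card {g \<in> words L n. hit_times S n g \<noteq> {}}) * (\<Sum>v\<in>words L n. F v)"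
proof -
  have restart: "(\<Sum>v\<in>words L (n + (n - j)). F v) = real (card L) ^ (n - j) * (\<Sum>v\<in>words L n. F v)"
    for j
    using sum_words_take[OF assms(1), of F n "n - j"] F by simp
  have "real (card {g \<in> words L n. hit_times S n g \<noteq> {}})
      = (\<Sum>g\<in>words L n. if hit_times S n g \<noteq> {} then 1 else 0)"
    using finite_words[OF assms(1)] by (simp add: sum.If_cases Int_def)
  also have "\<dots> = (\<Sum>j\<in>{1..n}. \<Sum>u\<in>words L j.
      if first_hit_at S j u then real (card L) ^ (n - j) else 0)"
    using sum_words_first_hit[OF assms(1) order_refl, where F = "\<lambda>_ _. 1"]
      card_words[OF assms(1)] by (simp cong: if_cong)
  finally have card: "real (card {g \<in> words L n. hit_times S n g \<noteq> {}})
      = (\<Sum>j\<in>{1..n}. \<Sum>u\<in>words L j. if first_hit_at S j u then real (card L) ^ (n - j) else 0)" .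
  have "(\<Sum>g\<in>words L (n + n). if hit_times S n g \<noteq> {} then F (drop (Min (hit_times S n g)) g) else 0)
      = (\<Sum>j\<in>{1..n}. \<Sum>u\<in>words L j. if first_hit_at S j u then (\<Sum>v\<in>words L (n + n - j). F v) else 0)"
    using sum_words_first_hit[OF assms(1), of n "n + n" S "\<lambda>_. F"] by simp
  also have "\<dots> = (\<Sum>j\<in>{1..n}. \<Sum>u\<in>words L j.
      (if first_hit_at S j u then real (card L) ^ (n - j) else 0) * (\<Sum>v\<in>words L n. F v))"
    by (intro sum.cong refl) (simp add: restart flip: restart[of j] add_diff_assoc)
  finally show ?thesis
    by (simp add: card sum_distrib_right)
qed

lemma twice_le_of_mult_le_mult_diff:
  fixes a b q x :: real
  assumes "0 < a" "0 \<le> b" "0 \<le> q" "q \<le> a" "a * x \<le> q * (a * b - x)"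
  shows "2 * x \<le> a * b"
proof (cases "a * b - x \<le> 0")
  case True
  then have "a * x \<le> 0"
    using assms(3,5) mult_nonneg_nonpos order_trans by blast
  then have "x \<le> 0"
    using assms(1) by (simp add: mult_le_0_iff)
  moreover have "0 \<le> a * b"
    using assms(1,2) by simp
  ultimately show ?thesis
    using True by linarith
next
  case False
  then have "q * (a * b - x) \<le> a * (a * b - x)"
    using assms(4) by (intro mult_right_mono) auto
  then have "a * x \<le> a * (a * b - x)"
    using assms(5) by linarith
  then have "x \<le> a * b - x"
    using assms(1) by simp
  then show ?thesis
    by linarith
qed

lemma sum_card_hit_times_le:
  assumes "finite L" "L \<noteq> {}" "product_free S"
  shows "(\<Sum>g\<in>words L n. real (card (hit_times S n g))) \<le> real (card L) ^ n * (real n + 1) / 2"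
proof -
  let ?K = "real (card L) ^ n" and ?X = "\<Sum>g\<in>words L n. real (card (hit_times S n g))"
  let ?restart = "\<lambda>g. drop (Min (hit_times S n g)) g"
  let ?c = "real (card {g \<in> words L n. hit_times S n g \<noteq> {}})"
  have "?K * ?X = (\<Sum>g\<in>words L (n + n). real (card (hit_times S n (take n g))))"
    using sum_words_take[OF assms(1), of "\<lambda>g. real (card (hit_times S n g))" n n] by simp
  also have "\<dots> \<le> (\<Sum>g\<in>words L (n + n).
      if hit_times S n g \<noteq> {} then real n + 1 - real (card (hit_times S n (?restart g))) else 0)"
  proof (intro sum_mono)
    fix g
    show "real (card (hit_times S n (take n g))) \<le>
        (if hit_times S n g \<noteq> {} then real n + 1 - real (card (hit_times S n (?restart g))) else 0)"
    proof (cases "hit_times S n g = {}")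
      case False
      then have "real (card (hit_times S n g) + card (hit_times S n (?restart g))) \<le> real (n + 1)"
        using card_hit_times_restart_le[OF assms(3)] of_nat_le_iff by blast
      then show ?thesis
        using False by (simp add: hit_times_take)
    qed (simp add: hit_times_take)
  qed
  also have "\<dots> = ?c * (\<Sum>v\<in>words L n. real n + 1 - real (card (hit_times S n v)))"
    by (rule sum_words_restart[OF assms(1)]) (simp add: hit_times_take)
  also have "\<dots> = ?c * (?K * (real n + 1) - ?X)"
    by (simp add: sum_subtractf card_words[OF assms(1)])
  finally have main: "?K * ?X \<le> ?c * (?K * (real n + 1) - ?X)" .
  have "card {g \<in> words L n. hit_times S n g \<noteq> {}} \<le> card (words L n)"
    by (intro card_mono finite_words assms(1)) auto
  then have c: "?c \<le> ?K"
    by (simp add: card_words[OF assms(1)] flip: of_nat_power)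
  have K: "0 < ?K"
    using assms(1,2) by (simp add: card_gt_0_iff)
  have "2 * ?X \<le> ?K * (real n + 1)"
    by (rule twice_le_of_mult_le_mult_diff[OF K _ _ c main]) simp_all
  then show ?thesis
    by linarith
qed

section \<open>The length of the random walk\<close>

lemma sum_letters_length_append_letter:
  fixes h :: "nat \<Rightarrow> real"
  assumes "finite A" "w \<in> free_group A"
  shows "(\<Sum>a\<in>letters A. h (length (append_letter w a))) =
    (if w = [] then num_letters A * h 1
     else h (length w - 1) + (num_letters A - 1) * h (length w + 1))"
proof (cases "w = []")
  case False
  define b where "b = inv_letter (last w)"
  have "last w \<in> letters A"
    using assms(2) False by (auto simp: free_group_def letters_def)
  then have b: "b \<in> letters A"
    by (simp add: b_def inv_letter_in_letters)
  have up: "h (length (append_letter w a)) = h (length w + 1)" if "a \<in> letters A - {b}" for a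
    using that by (auto simp: b_def inv_letter_eq_iff length_append_letter)
  have "card (letters A - {b}) = card (letters A) - 1" "1 \<le> card (letters A)"
    using b assms(1) card_gt_0_iff[of "letters A"] by (auto simp: card_Diff_singleton)
  then have card: "real (card (letters A - {b})) = num_letters A - 1"
    by (simp add: num_letters_def of_nat_diff)
  have "(\<Sum>a\<in>letters A. h (length (append_letter w a))) =
      h (length (append_letter w b)) + (\<Sum>a\<in>letters A - {b}. h (length (append_letter w a)))"
    using sum.remove[OF finite_letters[OF assms(1)] b] by simp
  also have "\<dots> = h (length w - 1) + (\<Sum>a\<in>letters A - {b}. h (length w + 1))"
  proof -
    have "h (length (append_letter w b)) = h (length w - 1)"
      using False by (simp add: length_append_letter b_def)
    moreover have "(\<Sum>a\<in>letters A - {b}. h (length (append_letter w a)))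
        = (\<Sum>a\<in>letters A - {b}. h (length w + 1))"
      by (rule sum.cong[OF refl up])
    ultimately show ?thesis
      by (simp only:)
  qed
  finally show ?thesis
    using False card by simp
qed (simp add: append_letter_def num_letters_def)

lemma sum_words_Suc_length:
  fixes h :: "nat \<Rightarrow> real"
  assumes "finite A"
  shows "(\<Sum>g\<in>words (letters A) (Suc t). h (length (reduce g))) =
    (\<Sum>u\<in>words (letters A) t.
       if reduce u = [] then num_letters A * h 1
       else h (length (reduce u) - 1) + (num_letters A - 1) * h (length (reduce u) + 1))"
  unfolding sum_words_Suc[OF finite_letters[OF assms]] reduce_snoc
  by (intro sum.cong refl sum_letters_length_append_letter[OF assms] reduce_in_free_group)
    (simp add: words_def)

definition length_count :: "'a set \<Rightarrow> nat \<Rightarrow> nat \<Rightarrow> real" where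
  "length_count A t l = (\<Sum>g\<in>words (letters A) t. if length (reduce g) = l then 1 else 0)"

definition length_prob :: "'a set \<Rightarrow> nat \<Rightarrow> nat \<Rightarrow> real" where
  "length_prob A t l = length_count A t l / num_letters A ^ t"

lemma length_count_nonneg: "0 \<le> length_count A t l"
  unfolding length_count_def by (intro sum_nonneg) auto

lemma length_prob_nonneg: "finite A \<Longrightarrow> A \<noteq> {} \<Longrightarrow> 0 \<le> length_prob A t l"
  unfolding length_prob_def
  by (intro divide_nonneg_pos length_count_nonneg zero_less_power num_letters_pos)

lemma length_prob_0: "length_prob A 0 l = (if l = 0 then 1 else 0)"
  by (simp add: length_prob_def length_count_def)

lemma length_count_Suc:
  assumes "finite A"
  shows "length_count A (Suc t) l =
    (\<Sum>u\<in>words (letters A) t.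
       if reduce u = [] then num_letters A * (if 1 = l then 1 else 0)
       else (if length (reduce u) - 1 = l then 1 else 0)
         + (num_letters A - 1) * (if length (reduce u) + 1 = l then 1 else 0))"
  unfolding length_count_def
  using sum_words_Suc_length[OF assms, of "\<lambda>m. if m = l then 1 else 0" t] by simp

lemma length_prob_Suc_0:
  assumes "finite A" "A \<noteq> {}"
  shows "length_prob A (Suc t) 0 = length_prob A t 1 / num_letters A"
proof -
  have "length_count A (Suc t) 0 = length_count A t 1"
    unfolding length_count_Suc[OF assms(1)] unfolding length_count_def
    by (intro sum.cong refl) (auto simp: le_Suc_eq)
  then show ?thesis
    using num_letters_pos[OF assms] by (simp add: length_prob_def field_simps)
qed

lemma length_prob_Suc_1:
  assumes "finite A" "A \<noteq> {}"
  shows "length_prob A (Suc t) (Suc 0) = length_prob A t 0 + length_prob A t 2 / num_letters A"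
proof -
  have "length_count A (Suc t) (Suc 0) = num_letters A * length_count A t 0 + length_count A t 2"
    unfolding length_count_Suc[OF assms(1)]
    unfolding length_count_def sum_distrib_left sum.distrib[symmetric] by (intro sum.cong refl) auto
  then show ?thesis
    using num_letters_pos[OF assms] by (simp add: length_prob_def field_simps)
qed

lemma length_prob_Suc_ge_2:
  assumes "finite A" "A \<noteq> {}" "2 \<le> l"
  shows "length_prob A (Suc t) l = length_prob A t (l + 1) / num_letters A
      + (num_letters A - 1) / num_letters A * length_prob A t (l - 1)"
proof -
  have "length_count A (Suc t) l
      = length_count A t (l + 1) + (num_letters A - 1) * length_count A t (l - 1)"
    unfolding length_count_Suc[OF assms(1)]
    unfolding length_count_def sum_distrib_left sum.distrib[symmetric]
    using assms(3) by (intro sum.cong refl) auto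
  then show ?thesis
    using num_letters_pos[OF assms(1,2)] by (simp add: length_prob_def field_simps)
qed

text \<open>The length of the walk is a birth-death chain on the naturals, stepping up with probability
  (N - 1)/N and down with probability 1/N (from 0 always up). Its expected number of visits
  to a length l \<ge> 1 is at most N/(N - 2), and to 0 at most 1 + 1/(N - 2).\<close>

definition green_const :: "real \<Rightarrow> real" where
  "green_const N = N / (N - 2)"

definition green_bound :: "real \<Rightarrow> nat \<Rightarrow> real" where
  "green_bound N l = (if l = 0 then 1 + green_const N / N else green_const N)"

lemma green_bound_rec:
  assumes "2 < N"
  shows "green_bound N 0 = 1 + green_bound N 1 / N"
    and "green_bound N 1 = green_bound N 0 + green_bound N 2 / N"
    and "2 \<le> l \<Longrightarrow> green_bound N l = green_bound N (l + 1) / N + (N - 1) / N * green_bound N (l - 1)"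
proof -
  have "1 + 2 * green_const N / N = green_const N"
    using assms by (simp add: green_const_def field_simps)
  then show "green_bound N 1 = green_bound N 0 + green_bound N 2 / N"
    by (simp add: green_bound_def)
  show "green_bound N 0 = 1 + green_bound N 1 / N"
    by (simp add: green_bound_def)
  show "green_bound N l = green_bound N (l + 1) / N + (N - 1) / N * green_bound N (l - 1)"
    if "2 \<le> l"
    using assms that by (simp add: green_bound_def field_simps)
qed

lemma sum_length_prob_le_green_bound:
  assumes "finite A" "2 \<le> card A"
  shows "(\<Sum>t\<le>n. length_prob A t l) \<le> green_bound (num_letters A) l"
proof (induction n arbitrary: l)
  case 0
  then show ?case
    using num_letters_ge_4[OF assms] by (simp add: length_prob_0 green_bound_def green_const_def)
next
  case (Suc n)
  define N where "N = num_letters A"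
  have N: "2 < N"
    using num_letters_ge_4[OF assms] by (simp add: N_def)
  have ne: "A \<noteq> {}"
    using assms(2) by auto
  have IH: "(\<Sum>t\<le>n. length_prob A t l') \<le> green_bound N l'" for l'
    using Suc.IH by (simp add: N_def)
  have shift: "(\<Sum>t\<le>Suc n. length_prob A t l) = length_prob A 0 l + (\<Sum>t\<le>n. length_prob A (Suc t) l)"
    by (rule sum.atMost_Suc_shift)
  consider "l = 0" | "l = 1" | "2 \<le> l"
    by linarith
  then have "(\<Sum>t\<le>Suc n. length_prob A t l) \<le> green_bound N l"
  proof cases
    case 1
    then have "(\<Sum>t\<le>Suc n. length_prob A t l) = 1 + (\<Sum>t\<le>n. length_prob A t 1) / N"
      using shift
      by (simp add: length_prob_0 length_prob_Suc_0[OF assms(1) ne] N_def sum_divide_distrib)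
    also have "\<dots> \<le> 1 + green_bound N 1 / N"
      using IH[of 1] N by (simp add: divide_right_mono)
    finally show ?thesis
      using green_bound_rec(1)[OF N] 1 by simp
  next
    case 2
    then have "(\<Sum>t\<le>Suc n. length_prob A t l)
        = (\<Sum>t\<le>n. length_prob A t 0) + (\<Sum>t\<le>n. length_prob A t 2) / N"
      using shift by (simp add: length_prob_0 length_prob_Suc_1[OF assms(1) ne] N_def sum.distrib
          sum_divide_distrib)
    also have "\<dots> \<le> green_bound N 0 + green_bound N 2 / N"
      using IH[of 0] IH[of 2] N by (intro add_mono divide_right_mono) auto
    finally show ?thesis
      using green_bound_rec(2)[OF N] 2 by simp
  next
    case 3
    then have "(\<Sum>t\<le>Suc n. length_prob A t l) =
        (\<Sum>t\<le>n. length_prob A t (l + 1)) / N + (N - 1) / N * (\<Sum>t\<le>n. length_prob A t (l - 1))"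
      using shift by (simp add: length_prob_0 length_prob_Suc_ge_2[OF assms(1) ne] N_def sum.distrib
          sum_divide_distrib sum_distrib_left)
    also have "\<dots> \<le> green_bound N (l + 1) / N + (N - 1) / N * green_bound N (l - 1)"
      using IH[of "l + 1"] IH[of "l - 1"] N
      by (intro add_mono mult_left_mono divide_right_mono) auto
    finally show ?thesis
      using green_bound_rec(3)[OF N 3] by simp
  qed
  then show ?case
    by (simp add: N_def)
qed

fun walk_count :: "real \<Rightarrow> nat \<Rightarrow> nat \<Rightarrow> real" where
  "walk_count N 0 l = (if l = 0 then 1 else 0)"
| "walk_count N (Suc t) l =
    (if l = 0 then N * walk_count N t 1
     else walk_count N t (l - 1) + (N - 1) * walk_count N t (l + 1))"

lemma sum_words_reduce_eq:
  assumes "finite A" "w \<in> free_group A"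
  shows "(\<Sum>g\<in>words (letters A) t. if reduce g = w then 1 else 0)
    = walk_count (num_letters A) t (length w)"
  using assms(2)
proof (induction t arbitrary: w)
  case (Suc t)
  have "reduced w"
    using Suc.prems by (simp add: free_group_def)
  then have "(\<Sum>g\<in>words (letters A) (Suc t). if reduce g = w then 1 else 0)
      = (\<Sum>u\<in>words (letters A) t. \<Sum>a\<in>letters A.
          if reduce u = append_letter w (inv_letter a) then 1 else 0)"
    by (simp add: sum_words_Suc assms(1) reduce_snoc append_letter_eq_iff reduced_reduce)
  also have "\<dots> = (\<Sum>a\<in>letters A.
      walk_count (num_letters A) t (length (append_letter w (inv_letter a))))"
    by (subst sum.swap)
      (simp add: Suc.IH append_letter_in_free_group[OF Suc.prems] inv_letter_in_letters)
  also have "\<dots> = (\<Sum>a\<in>letters A. walk_count (num_letters A) t (length (append_letter w a)))"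
    by (rule sum.reindex_bij_witness[where i = inv_letter and j = inv_letter])
      (auto simp: inv_letter_in_letters)
  also have "\<dots> = walk_count (num_letters A) (Suc t) (length w)"
    by (simp add: sum_letters_length_append_letter[OF assms(1) Suc.prems])
  finally show ?case .
qed (simp add: reduce_def)

lemma layer_subset_words: "layer A l \<subseteq> words (letters A) l"
  by (auto simp: layer_def free_group_def words_def letters_def)

lemma finite_layer: "finite A \<Longrightarrow> finite (layer A l)"
  by (rule finite_subset[OF layer_subset_words]) (simp add: finite_words)

lemma sum_words_reduce_mem_layer:
  assumes "finite A" "B \<subseteq> layer A l"
  shows "(\<Sum>g\<in>words (letters A) t. if reduce g \<in> B then 1 else 0)
       = real (card B) * walk_count (num_letters A) t l"
proof -
  have B: "finite B"
    using assms finite_layer finite_subset by blast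
  have "(\<Sum>g\<in>words (letters A) t. if reduce g \<in> B then 1 else 0)
      = (\<Sum>w\<in>B. \<Sum>g\<in>words (letters A) t. if reduce g = w then 1 else 0)"
    by (subst sum.swap) (simp add: sum.delta'[OF B])
  also have "\<dots> = (\<Sum>w\<in>B. walk_count (num_letters A) t l)"
    using assms by (intro sum.cong refl) (auto simp: sum_words_reduce_eq layer_def)
  finally show ?thesis
    by simp
qed

lemma length_count_eq_card_layer:
  assumes "finite A"
  shows "length_count A t l = real (card (layer A l)) * walk_count (num_letters A) t l"
proof -
  have "length_count A t l = (\<Sum>g\<in>words (letters A) t. if reduce g \<in> layer A l then 1 else 0)"
    unfolding length_count_def
    by (intro sum.cong refl) (auto simp: layer_def words_def reduce_in_free_group)
  then show ?thesis
    by (simp add: sum_words_reduce_mem_layer[OF assms order_refl])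
qed

section \<open>Escape of the random walk\<close>

definition exp_moment :: "'a set \<Rightarrow> nat \<Rightarrow> real \<Rightarrow> real" where
  "exp_moment A t z = (\<Sum>g\<in>words (letters A) t. z ^ length (reduce g))"

definition mgf_ratio :: "real \<Rightarrow> real \<Rightarrow> real" where
  "mgf_ratio N z = (1 / z + (N - 1) * z) / N"

lemma mgf_ratio_ge_1:
  assumes "1 \<le> z" "2 \<le> N"
  shows "1 \<le> mgf_ratio N z"
proof -
  have "1 * 1 \<le> (N - 1) * z"
    using assms by (intro mult_mono) auto
  then have "0 \<le> ((N - 1) * z - 1) * (z - 1) / z"
    using assms by (intro divide_nonneg_pos mult_nonneg_nonneg) auto
  also have "\<dots> = (1 / z + (N - 1) * z) - N"
    using assms by (simp add: field_simps)
  finally show ?thesis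
    using assms by (simp add: mgf_ratio_def field_simps)
qed

lemma exp_moment_Suc_le:
  assumes "finite A" "1 \<le> z"
  shows "exp_moment A (Suc t) z \<le>
    (1 / z + (num_letters A - 1) * z) * exp_moment A t z + (z - 1 / z) * num_letters A ^ t"
proof -
  let ?N = "num_letters A"
  have step: "(if r = [] then ?N * z ^ 1 else z ^ (length r - 1) + (?N - 1) * z ^ (length r + 1))
      \<le> (1 / z + (?N - 1) * z) * z ^ length r + (z - 1 / z)" for r :: "('a \<times> bool) list"
  proof (cases r)
    case (Cons x r')
    have "1 / z \<le> 1"
      using assms(2) by simp
    then have "0 \<le> z - 1 / z"
      using assms(2) by linarith
    then show ?thesis
      using Cons assms(2) by (simp add: field_simps)
  qed (use assms(2) in \<open>simp add: field_simps\<close>)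
  have "exp_moment A (Suc t) z
      \<le> (\<Sum>u\<in>words (letters A) t. (1 / z + (?N - 1) * z) * z ^ length (reduce u) + (z - 1 / z))"
    unfolding exp_moment_def sum_words_Suc_length[OF assms(1)] by (intro sum_mono step)
  also have "\<dots> = (1 / z + (?N - 1) * z) * exp_moment A t z + (z - 1 / z) * ?N ^ t"
    by (simp add: exp_moment_def sum.distrib sum_distrib_left card_words assms(1) num_letters_def)
  finally show ?thesis .
qed

lemma exp_moment_le:
  assumes "finite A" "A \<noteq> {}" "1 \<le> z"
  shows "exp_moment A t z / num_letters A ^ t
    \<le> mgf_ratio (num_letters A) z ^ t * (1 + real t * ((z - 1 / z) / num_letters A))"
proof (induction t)
  case 0
  then show ?case
    by (simp add: exp_moment_def)
next
  case (Suc t)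
  define N where "N = num_letters A"
  define \<phi> where "\<phi> = mgf_ratio N z"
  define c where "c = (z - 1 / z) / N"
  have N: "2 \<le> N"
    using assms(1,2) by (simp add: N_def num_letters_eq Suc_leI card_gt_0_iff)
  have \<phi>: "1 \<le> \<phi>"
    unfolding \<phi>_def by (rule mgf_ratio_ge_1[OF assms(3) N])
  have c: "0 \<le> c"
    using assms(3) N mult_mono[OF assms(3) assms(3)] by (simp add: c_def field_simps)
  have "exp_moment A (Suc t) z / N ^ Suc t
      \<le> ((1 / z + (N - 1) * z) * exp_moment A t z + (z - 1 / z) * N ^ t) / N ^ Suc t"
    using exp_moment_Suc_le[OF assms(1,3), of t] N by (simp add: N_def divide_right_mono)
  also have "\<dots> = \<phi> * (exp_moment A t z / N ^ t) + c"
    using N by (simp add: \<phi>_def c_def mgf_ratio_def field_simps)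
  also have "\<dots> \<le> \<phi> * (\<phi> ^ t * (1 + real t * c)) + \<phi> ^ Suc t * c"
  proof (rule add_mono)
    show "\<phi> * (exp_moment A t z / N ^ t) \<le> \<phi> * (\<phi> ^ t * (1 + real t * c))"
      using Suc.IH \<phi> by (intro mult_left_mono) (auto simp: N_def \<phi>_def c_def)
    show "c \<le> \<phi> ^ Suc t * c"
      using c one_le_power[OF \<phi>, of "Suc t"] by (simp add: mult_le_cancel_right1 del: power_Suc)
  qed
  also have "\<dots> = \<phi> ^ Suc t * (1 + real (Suc t) * c)"
    by (simp add: algebra_simps)
  finally show ?case
    by (simp add: N_def \<phi>_def c_def)
qed

definition long_count :: "'a set \<Rightarrow> nat \<Rightarrow> nat \<Rightarrow> real" where
  "long_count A t L = (\<Sum>g\<in>words (letters A) t. if L < length (reduce g) then 1 else 0)"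

lemma long_count_le_exp_moment:
  assumes "1 \<le> z"
  shows "long_count A t L \<le> exp_moment A t z / z ^ L"
  unfolding long_count_def exp_moment_def sum_divide_distrib
proof (rule sum_mono)
  fix g
  have "L < length (reduce g) \<Longrightarrow> z ^ L \<le> z ^ length (reduce g)"
    using assms by (intro power_increasing) auto
  then show "(if L < length (reduce g) then 1 else 0) \<le> z ^ length (reduce g) / z ^ L"
    using assms by auto
qed

lemma sum_length_count_add_long_count:
  assumes "finite A"
  shows "(\<Sum>l\<le>L. length_count A t l) + long_count A t L = num_letters A ^ t"
proof -
  have "(\<Sum>l\<le>L. length_count A t l) + long_count A t L =
      (\<Sum>g\<in>words (letters A) t. (\<Sum>l\<le>L. if length (reduce g) = l then 1 else 0)
        + (if L < length (reduce g) then 1 else 0))"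
    unfolding length_count_def long_count_def by (subst sum.swap) (simp add: sum.distrib)
  also have "\<dots> = (\<Sum>g\<in>words (letters A) t. 1)"
    by (intro sum.cong refl) (simp add: sum.delta')
  finally show ?thesis
    by (simp add: card_words assms num_letters_def)
qed

lemma sum_long_count_le:
  assumes "finite A" "A \<noteq> {}" "1 \<le> z"
  defines "N \<equiv> num_letters A"
  shows "(\<Sum>t\<in>{1..n}. long_count A t L / N ^ t)
    \<le> real n * (mgf_ratio N z ^ n * (1 + real n * ((z - 1 / z) / N))) / z ^ L"
proof -
  let ?\<phi> = "mgf_ratio N z" and ?c = "(z - 1 / z) / N"
  have N: "2 \<le> N"
    using assms(1,2) by (simp add: N_def num_letters_eq Suc_leI card_gt_0_iff)
  have \<phi>: "1 \<le> ?\<phi>"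
    by (rule mgf_ratio_ge_1[OF assms(3) N])
  have c: "0 \<le> ?c"
    using assms(3) N mult_mono[OF assms(3) assms(3)] by (simp add: field_simps)
  have "long_count A t L / N ^ t \<le> ?\<phi> ^ n * (1 + real n * ?c) / z ^ L" if t: "t \<in> {1..n}" for t
  proof -
    have "long_count A t L / N ^ t \<le> (exp_moment A t z / z ^ L) / N ^ t"
      using long_count_le_exp_moment[OF assms(3)] N by (intro divide_right_mono) auto
    also have "\<dots> = (exp_moment A t z / N ^ t) / z ^ L"
      by simp
    also have "\<dots> \<le> ?\<phi> ^ t * (1 + real t * ?c) / z ^ L"
      using exp_moment_le[OF assms(1-3), of t] assms(3) unfolding N_def
      by (intro divide_right_mono) auto
    also have "\<dots> \<le> ?\<phi> ^ n * (1 + real n * ?c) / z ^ L"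
    proof -
      have "0 \<le> 1 + real t * ?c"
        by (intro add_nonneg_nonneg mult_nonneg_nonneg zero_le_one of_nat_0_le_iff c)
      then show ?thesis
        using t \<phi> c assms(3)
        by (intro divide_right_mono mult_mono power_increasing add_left_mono mult_right_mono) auto
    qed
    finally show ?thesis .
  qed
  then have "(\<Sum>t\<in>{1..n}. long_count A t L / N ^ t)
      \<le> (\<Sum>t\<in>{1..n}. ?\<phi> ^ n * (1 + real n * ?c) / z ^ L)"
    by (rule sum_mono)
  then show ?thesis
    by simp
qed

text \<open>Near z = 1, ln (mgf_ratio N z) grows like (z - 1)(N - 2)/N, where (N - 2)/N is the escape
  speed of the walk.\<close>

lemma exists_mgf_ratio_powr_less:
  fixes N \<beta> :: real
  assumes "2 \<le> N" "\<beta> * ((N - 2) / N) < 1"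
  shows "\<exists>z>1. mgf_ratio N z powr \<beta> < z"
proof -
  define h where "h z = ln z - \<beta> * ln (mgf_ratio N z)" for z
  have "(h has_real_derivative (1 - \<beta> * ((N - 2) / N))) (at 1)"
    unfolding h_def mgf_ratio_def using assms(1)
    by (auto intro!: derivative_eq_intros simp: field_simps)
  then obtain d where d: "0 < d" "\<forall>e>0. e < d \<longrightarrow> h 1 < h (1 + e)"
    using DERIV_pos_inc_right assms(2) by (metis diff_gt_0_iff_gt)
  define z where "z = 1 + d / 2"
  have z: "1 < z"
    using d(1) by (simp add: z_def)
  have "h 1 < h z"
    using d by (simp add: z_def)
  moreover have "h 1 = 0"
    using assms(1) by (simp add: h_def mgf_ratio_def)
  moreover have "mgf_ratio N 1 = 1"
    using assms(1) by (simp add: mgf_ratio_def)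
  ultimately have "\<beta> * ln (mgf_ratio N z) < ln z"
    by (simp add: h_def)
  moreover have "0 < mgf_ratio N z"
    using z assms(1) by (simp add: mgf_ratio_def add_pos_pos)
  ultimately have "mgf_ratio N z powr \<beta> < exp (ln z)"
    by (simp add: powr_def)
  then show ?thesis
    using z by auto
qed

lemma tendsto_square_mult_power_0:
  fixes \<rho> :: real
  assumes "0 \<le> \<rho>" "\<rho> < 1"
  shows "(\<lambda>L. real L ^ 2 * \<rho> ^ L) \<longlonglongrightarrow> 0"
proof -
  define s where "s = sqrt \<rho>"
  have "norm s < 1"
    using assms by (simp add: s_def real_sqrt_lt_1_iff)
  then have "(\<lambda>L. (real L * s ^ L) * (real L * s ^ L)) \<longlonglongrightarrow> 0 * 0"
    by (intro tendsto_mult powser_times_n_limit_0)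
  moreover have "(real L * s ^ L) * (real L * s ^ L) = real L ^ 2 * \<rho> ^ L" for L
    using assms by (simp add: s_def power2_eq_square power_mult_distrib[symmetric] algebra_simps)
  ultimately show ?thesis
    by simp
qed

lemma sum_long_prob_floor_le:
  assumes "finite A" "A \<noteq> {}" "0 \<le> \<beta>" "1 \<le> z"
  defines "N \<equiv> num_letters A"
  defines "c \<equiv> (z - 1 / z) / N" and "\<rho> \<equiv> mgf_ratio N z powr \<beta> / z"
  shows "(\<Sum>t\<in>{1..nat \<lfloor>\<beta> * real L\<rfloor>}. long_count A t L / N ^ t)
    \<le> \<beta> * (real L * \<rho> ^ L) + \<beta>\<^sup>2 * c * (real L ^ 2 * \<rho> ^ L)"
proof -
  define \<phi> where "\<phi> = mgf_ratio N z"
  define n where "n = nat \<lfloor>\<beta> * real L\<rfloor>"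
  have N: "2 \<le> N"
    using assms(1,2) by (simp add: N_def num_letters_eq Suc_leI card_gt_0_iff)
  have \<phi>: "1 \<le> \<phi>"
    unfolding \<phi>_def by (rule mgf_ratio_ge_1[OF assms(4) N])
  have c: "0 \<le> c"
    using assms(4) N mult_mono[OF assms(4) assms(4)] by (simp add: c_def field_simps)
  have n: "real n \<le> \<beta> * real L"
    using assms(3) by (simp add: n_def)
  have "\<phi> ^ n = \<phi> powr real n"
    using \<phi> by (simp add: powr_realpow)
  also have "\<dots> \<le> \<phi> powr (\<beta> * real L)"
    using \<phi> n by (intro powr_mono) auto
  also have "\<dots> = (\<phi> powr \<beta>) ^ L"
    using \<phi> by (simp add: powr_powr powr_realpow[symmetric])
  finally have \<phi>n: "\<phi> ^ n \<le> (\<phi> powr \<beta>) ^ L" .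
  have "(\<Sum>t\<in>{1..n}. long_count A t L / N ^ t) \<le> real n * (\<phi> ^ n * (1 + real n * c)) / z ^ L"
    using sum_long_count_le[OF assms(1,2,4)] by (simp add: N_def \<phi>_def c_def)
  also have "\<dots> \<le> (\<beta> * real L) * ((\<phi> powr \<beta>) ^ L * (1 + (\<beta> * real L) * c)) / z ^ L"
    using n \<phi>n c \<phi> assms(3,4)
    by (intro divide_right_mono mult_mono add_left_mono mult_right_mono) auto
  also have "\<dots> = \<beta> * (real L * \<rho> ^ L) + \<beta>\<^sup>2 * c * (real L ^ 2 * \<rho> ^ L)"
    using assms(4) by (simp add: \<rho>_def \<phi>_def power_divide field_simps power2_eq_square)
  finally show ?thesis
    by (simp add: n_def)
qed

lemma sum_long_prob_tendsto_0:
  assumes "finite A" "A \<noteq> {}" "0 \<le> \<beta>"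
    and \<beta>: "\<beta> * ((num_letters A - 2) / num_letters A) < 1"
  shows "(\<lambda>L. \<Sum>t\<in>{1..nat \<lfloor>\<beta> * real L\<rfloor>}. long_count A t L / num_letters A ^ t) \<longlonglongrightarrow> 0"
proof -
  define N where "N = num_letters A"
  have "2 \<le> N"
    using assms(1,2) by (simp add: N_def num_letters_eq Suc_leI card_gt_0_iff)
  then obtain z where z: "1 < z" and less: "mgf_ratio N z powr \<beta> < z"
    using exists_mgf_ratio_powr_less \<beta> by (auto simp: N_def)
  define c where "c = (z - 1 / z) / N"
  define \<rho> where "\<rho> = mgf_ratio N z powr \<beta> / z"
  have "0 \<le> \<rho>" "\<rho> < 1"
    using z less by (simp_all add: \<rho>_def)
  then have "(\<lambda>L. \<beta> * (real L * \<rho> ^ L) + \<beta>\<^sup>2 * c * (real L ^ 2 * \<rho> ^ L)) \<longlonglongrightarrow> \<beta> * 0 + \<beta>\<^sup>2 * c * 0"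
    by (intro tendsto_intros powser_times_n_limit_0 tendsto_square_mult_power_0) auto
  then have lim: "(\<lambda>L. \<beta> * (real L * \<rho> ^ L) + \<beta>\<^sup>2 * c * (real L ^ 2 * \<rho> ^ L)) \<longlonglongrightarrow> 0"
    by simp
  show ?thesis
    unfolding N_def[symmetric]
  proof (rule tendsto_sandwich[OF always_eventually always_eventually tendsto_const lim])
    show "\<forall>L. 0 \<le> (\<Sum>t\<in>{1..nat \<lfloor>\<beta> * real L\<rfloor>}. long_count A t L / N ^ t)"
      by (intro allI sum_nonneg divide_nonneg_nonneg)
        (simp_all add: long_count_def sum_nonneg N_def num_letters_def)
    show "\<forall>L. (\<Sum>t\<in>{1..nat \<lfloor>\<beta> * real L\<rfloor>}. long_count A t L / N ^ t)
        \<le> \<beta> * (real L * \<rho> ^ L) + \<beta>\<^sup>2 * c * (real L ^ 2 * \<rho> ^ L)"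
      using sum_long_prob_floor_le[OF assms(1-3)] z by (simp add: N_def c_def \<rho>_def)
  qed
qed

section \<open>Densities on spheres\<close>

lemma sum_atMost_split_head:
  fixes f :: "nat \<Rightarrow> 'b::comm_monoid_add"
  shows "(\<Sum>l\<le>L. f l) = f 0 + (\<Sum>l\<in>{1..L}. f l)"
  by (simp add: atMost_atLeast0 sum.atLeast_Suc_atMost)

lemma card_layer_pos:
  assumes "finite A" "A \<noteq> {}"
  shows "0 < card (layer A l)"
proof -
  obtain a where "a \<in> A"
    using assms(2) by auto
  then have "replicate l (a, True) \<in> layer A l"
    by (auto simp: layer_def free_group_def reduced_replicate)
  then show ?thesis
    using finite_layer[OF assms(1)] card_gt_0_iff by blast
qed

definition layer_density :: "'a set \<Rightarrow> ('a \<times> bool) list set \<Rightarrow> nat \<Rightarrow> real" where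
  "layer_density A S l = real (card {w \<in> S. length w = l}) / real (card (layer A l))"

lemma layer_density_nonneg: "0 \<le> layer_density A S l"
  by (simp add: layer_density_def)

lemma layer_density_le_1:
  assumes "finite A" "S \<subseteq> free_group A"
  shows "layer_density A S l \<le> 1"
proof -
  have "card {w \<in> S. length w = l} \<le> card (layer A l)"
    using assms by (intro card_mono finite_layer) (auto simp: layer_def)
  then show ?thesis
    by (cases "card (layer A l) = 0") (simp_all add: layer_density_def divide_le_eq_1)
qed

lemma layer_density_0:
  assumes "product_free S"
  shows "layer_density A S 0 = 0"
proof -
  have "{w \<in> S. length w = 0} = {}"
    using Nil_notin_product_free[OF assms] by auto
  then show ?thesis
    by (simp add: layer_density_def)
qed

lemma layer_density_free_group: "finite A \<Longrightarrow> A \<noteq> {} \<Longrightarrow> layer_density A (free_group A) l = 1"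
  using card_layer_pos[of A l] by (simp add: layer_density_def layer_def)

lemma mu_le_eq_sum_layer_density:
  assumes "finite A" "B \<subseteq> free_group A"
  shows "mu_le A B L = (\<Sum>l\<le>L. layer_density A B l)"
proof -
  have fin: "finite {w \<in> B. length w \<le> L}"
  proof (rule finite_subset)
    show "{w \<in> B. length w \<le> L} \<subseteq> {w. set w \<subseteq> letters A \<and> length w \<le> L}"
      using assms(2) by (auto simp: free_group_def letters_def)
    show "finite {w. set w \<subseteq> letters A \<and> length w \<le> L}"
      using assms(1) by (simp add: finite_lists_length_le)
  qed
  have "mu_le A B L = (\<Sum>w\<in>{w \<in> B. length w \<le> L}. \<Sum>l\<le>L.
      if length w = l then 1 / real (card (layer A l)) else 0)"
    unfolding mu_le_def by (intro sum.cong refl) (simp add: sum.delta')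
  also have "\<dots> = (\<Sum>l\<le>L. \<Sum>w\<in>{w \<in> B. length w \<le> L}.
      if length w = l then 1 / real (card (layer A l)) else 0)"
    by (rule sum.swap)
  also have "\<dots> = (\<Sum>l\<le>L. \<Sum>w\<in>{w \<in> B. length w = l}. 1 / real (card (layer A l)))"
  proof (rule sum.cong[OF refl])
    fix l
    assume "l \<in> {..L}"
    then have "{w \<in> {w \<in> B. length w \<le> L}. length w = l} = {w \<in> B. length w = l}"
      by auto
    then show "(\<Sum>w\<in>{w \<in> B. length w \<le> L}. if length w = l then 1 / real (card (layer A l)) else 0)
        = (\<Sum>w\<in>{w \<in> B. length w = l}. 1 / real (card (layer A l)))"
      using sum.inter_filter[OF fin, of "\<lambda>_. 1 / real (card (layer A l))" "\<lambda>w. length w = l"]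
      by simp
  qed
  finally show ?thesis
    by (simp add: layer_density_def)
qed

lemma mu_le_free_group: "finite A \<Longrightarrow> A \<noteq> {} \<Longrightarrow> mu_le A (free_group A) L = real L + 1"
  by (simp add: mu_le_eq_sum_layer_density layer_density_free_group)

lemma sum_words_reduce_mem:
  assumes "finite A" "A \<noteq> {}" "S \<subseteq> free_group A" "t \<le> n"
  shows "(\<Sum>u\<in>words (letters A) t. if reduce u \<in> S then 1 else 0)
    = num_letters A ^ t * (\<Sum>l\<le>n. length_prob A t l * layer_density A S l)"
proof -
  have layer: "card (layer A l) \<noteq> 0" for l
    using card_layer_pos[OF assms(1,2)] by simp
  have "(\<Sum>u\<in>words (letters A) t. if reduce u \<in> S then 1 else 0)
      = (\<Sum>u\<in>words (letters A) t. \<Sum>l\<le>n. if reduce u \<in> {w \<in> S. length w = l} then 1 else 0)"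
  proof (intro sum.cong refl)
    fix u
    assume "u \<in> words (letters A) t"
    then have "length (reduce u) \<le> n"
      using length_reduce_le[of u] assms(4) by (simp add: words_def)
    then show "(if reduce u \<in> S then 1 else 0)
        = (\<Sum>l\<le>n. if reduce u \<in> {w \<in> S. length w = l} then 1 else 0)"
      by (simp add: sum.delta conj_commute)
  qed
  also have "\<dots> = (\<Sum>l\<le>n. real (card {w \<in> S. length w = l}) * walk_count (num_letters A) t l)"
    using assms(3) by (subst sum.swap) (intro sum.cong refl sum_words_reduce_mem_layer[OF assms(1)],
        auto simp: layer_def)
  also have "\<dots> = num_letters A ^ t * (\<Sum>l\<le>n. length_prob A t l * layer_density A S l)"
    unfolding sum_distrib_left
    using num_letters_pos[OF assms(1,2)] by (intro sum.cong refl)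
      (simp add: length_prob_def layer_density_def length_count_eq_card_layer[OF assms(1)] layer)
  finally show ?thesis .
qed

lemma sum_card_hit_times_eq:
  assumes "finite L"
  shows "(\<Sum>g\<in>words L n. real (card (hit_times S n g)))
    = (\<Sum>t\<in>{1..n}. real (card L) ^ (n - t) * (\<Sum>u\<in>words L t. if reduce u \<in> S then 1 else 0))"
proof -
  have "real (card (hit_times S n g)) = (\<Sum>t\<in>{1..n}. if reduce (take t g) \<in> S then 1 else 0)" for g
    by (simp add: hit_times_def sum.If_cases Int_def)
  then have "(\<Sum>g\<in>words L n. real (card (hit_times S n g)))
      = (\<Sum>g\<in>words L n. \<Sum>t\<in>{1..n}. if reduce (take t g) \<in> S then 1 else 0)"
    by simp
  also have "\<dots> = (\<Sum>t\<in>{1..n}. \<Sum>g\<in>words L (t + (n - t)). if reduce (take t g) \<in> S then 1 else 0)"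
    by (subst sum.swap) (intro sum.cong refl, simp)
  also have "\<dots> = (\<Sum>t\<in>{1..n}.
      real (card L) ^ (n - t) * (\<Sum>u\<in>words L t. if reduce u \<in> S then 1 else 0))"
    by (intro sum.cong refl sum_words_take[OF assms])
  finally show ?thesis .
qed

lemma sum_length_prob_layer_density_le:
  assumes "finite A" "A \<noteq> {}" "S \<subseteq> free_group A" "product_free S"
  shows "(\<Sum>t\<in>{1..n}. \<Sum>l\<le>n. length_prob A t l * layer_density A S l) \<le> (real n + 1) / 2"
proof -
  let ?N = "num_letters A"
  have "?N ^ n * (\<Sum>t\<in>{1..n}. \<Sum>l\<le>n. length_prob A t l * layer_density A S l)
      = (\<Sum>t\<in>{1..n}. ?N ^ (n - t) * (?N ^ t * (\<Sum>l\<le>n. length_prob A t l * layer_density A S l)))"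
    unfolding sum_distrib_left by (intro sum.cong refl) (simp add: power_add[symmetric])
  also have "\<dots> = (\<Sum>g\<in>words (letters A) n. real (card (hit_times S n g)))"
    unfolding sum_card_hit_times_eq[OF finite_letters[OF assms(1)]]
  proof (intro sum.cong refl)
    fix t
    assume "t \<in> {1..n}"
    then show "?N ^ (n - t) * (?N ^ t * (\<Sum>l\<le>n. length_prob A t l * layer_density A S l))
        = real (card (letters A)) ^ (n - t)
          * (\<Sum>u\<in>words (letters A) t. if reduce u \<in> S then 1 else 0)"
      using sum_words_reduce_mem[OF assms(1-3), of t n] by (simp add: num_letters_def)
  qed
  also have "\<dots> \<le> ?N ^ n * ((real n + 1) / 2)"
    using sum_card_hit_times_le[OF finite_letters[OF assms(1)] _ assms(4), of n] assms(2)
    by (simp add: num_letters_def letters_def)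
  finally show ?thesis
    using num_letters_pos[OF assms(1,2)] by simp
qed

section \<open>A single generator\<close>

lemma reduced_single_letter:
  "set w \<subseteq> {a} \<times> UNIV \<Longrightarrow> reduced w \<Longrightarrow> w = replicate (length w) (hd w)"
proof (induction w)
  case (Cons x w)
  show ?case
  proof (cases w)
    case (Cons y w')
    then have "y = x"
      using Cons.prems by (cases x, cases y) (auto simp: inv_letter_def)
    then show ?thesis
      using Cons.IH Cons.prems Cons by (auto simp: reduced_Cons)
  qed simp
qed simp

lemma layer_singleton:
  assumes "1 \<le> l"
  shows "layer {a} l = {replicate l (a, True), replicate l (a, False)}"
proof
  show "layer {a} l \<subseteq> {replicate l (a, True), replicate l (a, False)}"
  proof
    fix w
    assume "w \<in> layer {a} l"
    then have w: "set w \<subseteq> {a} \<times> UNIV" "reduced w" "length w = l"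
      by (auto simp: layer_def free_group_def)
    then have "hd w \<in> {a} \<times> UNIV"
      using assms by (cases w) auto
    then have "hd w = (a, True) \<or> hd w = (a, False)"
      by auto
    then show "w \<in> {replicate l (a, True), replicate l (a, False)}"
      using reduced_single_letter[OF w(1,2)] w(3) by auto
  qed
qed (auto simp: layer_def free_group_def reduced_replicate)

lemma card_replicate_mem_product_free_le:
  assumes "product_free S"
  shows "real (card {l \<in> {1..n}. replicate l x \<in> S}) \<le> (real n + 1) / 2"
proof -
  have "words {x} n = {replicate n x}"
    by (auto simp: words_def intro: replicate_length_same[symmetric])
  moreover have "hit_times S n (replicate n x) = {l \<in> {1..n}. replicate l x \<in> S}"
    by (auto simp: hit_times_def reduce_reduced reduced_replicate min_def)
  ultimately show ?thesis
    using sum_card_hit_times_le[OF _ _ assms, of "{x}" n] by simp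
qed

lemma sum_layer_density_singleton_le:
  assumes "S \<subseteq> free_group {a}" "product_free S"
  shows "(\<Sum>l\<le>L. layer_density {a} S l) \<le> (real L + 1) / 2"
proof -
  let ?hits = "\<lambda>b l. if replicate l (a, b) \<in> S then 1 else 0 :: real"
  have density: "layer_density {a} S l = (?hits True l + ?hits False l) / 2" if "1 \<le> l" for l
  proof -
    have "{w \<in> S. length w = l} = ({replicate l (a, True)} \<inter> S) \<union> ({replicate l (a, False)} \<inter> S)"
      using assms(1) layer_singleton[OF that, of a] by (auto simp: layer_def)
    moreover have "replicate l (a, True) \<noteq> replicate l (a, False)"
      using that by (cases l) auto
    ultimately show ?thesis
      using layer_singleton[OF that, of a] by (simp add: layer_density_def card_Un_disjoint)
  qed
  have hits: "(\<Sum>l\<in>{1..L}. ?hits b l) \<le> (real L + 1) / 2" for b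
    using card_replicate_mem_product_free_le[OF assms(2), of L "(a, b)"]
    by (simp add: sum.If_cases Int_def)
  have "(\<Sum>l\<le>L. layer_density {a} S l) = (\<Sum>l\<in>{1..L}. ?hits True l / 2 + ?hits False l / 2)"
    using layer_density_0[OF assms(2)]
    by (simp add: sum_atMost_split_head[of _ L] density add_divide_distrib)
  also have "\<dots> = (\<Sum>l\<in>{1..L}. ?hits True l) / 2 + (\<Sum>l\<in>{1..L}. ?hits False l) / 2"
    by (simp add: sum.distrib sum_divide_distrib)
  also have "\<dots> \<le> (real L + 1) / 2"
    using hits[of True] hits[of False] by linarith
  finally show ?thesis .
qed

section \<open>The density estimate\<close>

definition length_visits :: "'a set \<Rightarrow> nat \<Rightarrow> nat \<Rightarrow> real" where
  "length_visits A n l = (\<Sum>t\<in>{1..n}. length_prob A t l)"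

lemma length_visits_nonneg: "finite A \<Longrightarrow> A \<noteq> {} \<Longrightarrow> 0 \<le> length_visits A n l"
  unfolding length_visits_def by (intro sum_nonneg length_prob_nonneg)

lemma length_visits_le_green_bound:
  assumes "finite A" "2 \<le> card A"
  shows "length_visits A n l \<le> green_bound (num_letters A) l"
proof -
  have "A \<noteq> {}"
    using assms(2) by auto
  then have "length_visits A n l \<le> (\<Sum>t\<le>n. length_prob A t l)"
    unfolding length_visits_def by (intro sum_mono2 length_prob_nonneg assms(1)) auto
  also have "\<dots> \<le> green_bound (num_letters A) l"
    by (rule sum_length_prob_le_green_bound[OF assms])
  finally show ?thesis .
qed

lemma sum_length_visits_atMost:
  assumes "finite A" "A \<noteq> {}"
  shows "(\<Sum>l\<le>L. length_visits A n l) = real n - (\<Sum>t\<in>{1..n}. long_count A t L / num_letters A ^ t)"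
proof -
  have "(\<Sum>l\<le>L. length_prob A t l) = 1 - long_count A t L / num_letters A ^ t" for t
    using sum_length_count_add_long_count[OF assms(1), where t = t and L = L]
      num_letters_pos[OF assms]
    by (simp add: length_prob_def field_simps flip: sum_divide_distrib)
  then show ?thesis
    unfolding length_visits_def by (subst sum.swap) (simp add: sum_subtractf)
qed

lemma sum_layer_density_le:
  assumes "finite A" "2 \<le> card A" "S \<subseteq> free_group A" "product_free S" "L \<le> n"
  defines "N \<equiv> num_letters A"
  shows "green_const N * (\<Sum>l\<le>L. layer_density A S l)
    \<le> green_const N * real L - (real n - 1) / 2 + (\<Sum>t\<in>{1..n}. long_count A t L / N ^ t)
      + green_bound N 0"
proof -
  let ?d = "layer_density A S" and ?G = "length_visits A n" and ?\<gamma> = "green_const N"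
  have ne: "A \<noteq> {}"
    using assms(2) by auto
  have d: "0 \<le> ?d l" "?d l \<le> 1" for l
    using layer_density_le_1[OF assms(1,3)] by (simp_all add: layer_density_nonneg)
  have G: "0 \<le> ?G l" "?G l \<le> green_bound N l" for l
    using length_visits_nonneg[OF assms(1) ne] length_visits_le_green_bound[OF assms(1,2)]
    by (simp_all add: N_def)
  have "(\<Sum>l\<le>L. ?G l * ?d l) \<le> (\<Sum>l\<le>n. ?G l * ?d l)"
    using assms(5) G d by (intro sum_mono2) auto
  also have "\<dots> = (\<Sum>t\<in>{1..n}. \<Sum>l\<le>n. length_prob A t l * ?d l)"
    unfolding length_visits_def sum_distrib_right by (rule sum.swap)
  also have "\<dots> \<le> (real n + 1) / 2"
    by (rule sum_length_prob_layer_density_le[OF assms(1) ne assms(3,4)])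
  finally have visits: "(\<Sum>l\<le>L. ?G l * ?d l) \<le> (real n + 1) / 2" .
  have "(\<Sum>l\<le>L. ?G l * (1 - ?d l)) \<le> (\<Sum>l\<le>L. green_bound N l * (1 - ?d l))"
    using G d by (intro sum_mono mult_right_mono) auto
  also have "\<dots> = green_bound N 0 + (?\<gamma> * real L - ?\<gamma> * (\<Sum>l\<le>L. ?d l))"
    using layer_density_0[OF assms(4)]
    by (simp add: sum_atMost_split_head[of _ L] green_bound_def sum_subtractf sum_distrib_left
        right_diff_distrib)
  finally have misses: "(\<Sum>l\<le>L. ?G l * (1 - ?d l))
      \<le> green_bound N 0 + (?\<gamma> * real L - ?\<gamma> * (\<Sum>l\<le>L. ?d l))" .
  have "real n - (\<Sum>t\<in>{1..n}. long_count A t L / N ^ t) = (\<Sum>l\<le>L. ?G l)"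
    by (simp add: sum_length_visits_atMost[OF assms(1) ne] N_def)
  also have "\<dots> = (\<Sum>l\<le>L. ?G l * ?d l) + (\<Sum>l\<le>L. ?G l * (1 - ?d l))"
    by (simp add: sum.distrib[symmetric] algebra_simps)
  also have "\<dots> \<le> (real n + 1) / 2 + (green_bound N 0 + (?\<gamma> * real L - ?\<gamma> * (\<Sum>l\<le>L. ?d l)))"
    using visits misses by (rule add_mono)
  finally show ?thesis
    by argo
qed

lemma green_const_mult_bounds:
  assumes "4 \<le> N" "0 < \<epsilon>" "\<epsilon> \<le> 2 / N"
  shows "1 \<le> green_const N * (1 - \<epsilon>)" "green_const N * (1 - \<epsilon>) * ((N - 2) / N) < 1"
  using assms by (simp_all add: green_const_def field_simps)

lemma sum_layer_density_le_linear:
  assumes "finite A" "2 \<le> card A" "S \<subseteq> free_group A" "product_free S"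
    and \<epsilon>: "0 < \<epsilon>" "\<epsilon> \<le> 2 / num_letters A"
  defines "N \<equiv> num_letters A"
  defines "\<beta> \<equiv> green_const N * (1 - \<epsilon>)"
  assumes tail: "(\<Sum>t\<in>{1..nat \<lfloor>\<beta> * real L\<rfloor>}. long_count A t L / N ^ t) \<le> 1"
  shows "(\<Sum>l\<le>L. layer_density A S l) \<le> real L * (1 + \<epsilon>) / 2 + (2 + green_bound N 0) / green_const N"
proof -
  define n where "n = nat \<lfloor>\<beta> * real L\<rfloor>"
  have N: "4 \<le> N"
    using num_letters_ge_4[OF assms(1,2)] by (simp add: N_def)
  have \<gamma>: "0 < green_const N"
    using N by (simp add: green_const_def)
  have \<beta>: "1 \<le> \<beta>"
    using green_const_mult_bounds[OF N] \<epsilon> by (simp add: \<beta>_def N_def)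
  then have n_eq: "real n = real_of_int \<lfloor>\<beta> * real L\<rfloor>"
    by (simp add: n_def)
  have n: "\<beta> * real L - 1 \<le> real n"
    using floor_correct[of "\<beta> * real L"] n_eq by simp
  have "real L \<le> \<beta> * real L"
    using \<beta> by (simp add: mult_le_cancel_right1)
  then have "L \<le> n"
    using n_eq by (simp add: n_def le_nat_floor)
  from sum_layer_density_le[OF assms(1-4) this]
  have "green_const N * (\<Sum>l\<le>L. layer_density A S l)
      \<le> green_const N * real L - (real n - 1) / 2 + 1 + green_bound N 0"
    using tail by (simp add: N_def n_def)
  also have "\<dots> \<le> green_const N * real L - \<beta> * real L / 2 + 2 + green_bound N 0"
    using n by argo
  also have "\<dots> = green_const N * (real L * (1 + \<epsilon>) / 2 + (2 + green_bound N 0) / green_const N)"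
    using \<gamma> by (simp add: \<beta>_def field_simps)
  finally show ?thesis
    using \<gamma> by simp
qed

lemma eventually_sum_layer_density_le:
  assumes "finite A" "2 \<le> card A" "S \<subseteq> free_group A" "product_free S"
    and \<epsilon>: "0 < \<epsilon>" "\<epsilon> \<le> 2 / num_letters A"
  shows "eventually (\<lambda>L. (\<Sum>l\<le>L. layer_density A S l) / (real L + 1) \<le> 1 / 2 + \<epsilon>) sequentially"
proof -
  define N where "N = num_letters A"
  define \<beta> where "\<beta> = green_const N * (1 - \<epsilon>)"
  define C where "C = (2 + green_bound N 0) / green_const N"
  have \<beta>: "1 \<le> \<beta>" "\<beta> * ((N - 2) / N) < 1"
    using green_const_mult_bounds num_letters_ge_4[OF assms(1,2)] \<epsilon> by (simp_all add: \<beta>_def N_def)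
  have "A \<noteq> {}"
    using assms(2) by auto
  then have "(\<lambda>L. \<Sum>t\<in>{1..nat \<lfloor>\<beta> * real L\<rfloor>}. long_count A t L / N ^ t) \<longlonglongrightarrow> 0"
    using sum_long_prob_tendsto_0[OF assms(1) _ _ \<beta>(2)[unfolded N_def]] \<beta>(1) by (simp add: N_def)
  then have "eventually (\<lambda>L. (\<Sum>t\<in>{1..nat \<lfloor>\<beta> * real L\<rfloor>}. long_count A t L / N ^ t) < 1) sequentially"
    by (rule order_tendstoD(2)) simp
  then have ev_tail:
      "eventually (\<lambda>L. (\<Sum>l\<le>L. layer_density A S l) \<le> real L * (1 + \<epsilon>) / 2 + C) sequentially"
    by (rule eventually_mono)
      (use sum_layer_density_le_linear[OF assms] in \<open>simp add: N_def \<beta>_def C_def\<close>)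
  have "(\<lambda>L. C / real (Suc L)) \<longlonglongrightarrow> 0"
    using LIMSEQ_inverse_real_of_nat by (auto intro: tendsto_mult_right_zero simp: divide_inverse)
  then have "eventually (\<lambda>L. C / real (Suc L) < \<epsilon> / 2) sequentially"
    using \<epsilon> by (intro order_tendstoD(2)) auto
  then have ev_C: "eventually (\<lambda>L. C \<le> (real L + 1) * (\<epsilon> / 2)) sequentially"
    by (rule eventually_mono) (auto simp: field_simps)
  show ?thesis
  proof (rule eventually_mono[OF eventually_conj[OF ev_tail ev_C]])
    fix L
    assume "(\<Sum>l\<le>L. layer_density A S l) \<le> real L * (1 + \<epsilon>) / 2 + C \<and> C \<le> (real L + 1) * (\<epsilon> / 2)"
    moreover have "(real L + 1) * (1 / 2 + \<epsilon>)
        = real L * (1 + \<epsilon>) / 2 + (real L + 1) * (\<epsilon> / 2) + (1 + \<epsilon>) / 2"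
      by (simp add: field_simps)
    ultimately have "(\<Sum>l\<le>L. layer_density A S l) \<le> (real L + 1) * (1 / 2 + \<epsilon>)"
      using \<epsilon>(1) by argo
    then show "(\<Sum>l\<le>L. layer_density A S l) / (real L + 1) \<le> 1 / 2 + \<epsilon>"
      by (simp add: divide_le_eq mult.commute)
  qed
qed

lemma eventually_density_ratio_le:
  assumes "finite A" "S \<subseteq> free_group A" "product_free S" "0 < e"
  shows "eventually (\<lambda>L. mu_le A S L / mu_le A (free_group A) L \<le> 1 / 2 + e) sequentially"
proof (cases "A = {}")
  case True
  then have "S = {}"
    using assms(2) Nil_notin_product_free[OF assms(3)] by (auto simp: free_group_def)
  then show ?thesis
    using assms(4) by (simp add: mu_le_def)
next
  case False
  have ratio: "mu_le A S L / mu_le A (free_group A) L = (\<Sum>l\<le>L. layer_density A S l) / (real L + 1)"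
    for L
    by (simp add: mu_le_eq_sum_layer_density[OF assms(1,2)] mu_le_free_group[OF assms(1) False])
  consider "card A = 1" | "2 \<le> card A"
    using False assms(1) card_0_eq[of A] by linarith
  then show ?thesis
  proof cases
    case 1
    then obtain a where "A = {a}"
      by (auto simp: card_1_singleton_iff)
    then have half: "(\<Sum>l\<le>L. layer_density A S l) / (real L + 1) \<le> 1 / 2" for L
      using sum_layer_density_singleton_le[of S a L] assms by (simp add: divide_le_eq)
    have "1 / 2 \<le> 1 / 2 + e"
      using assms(4) by simp
    then have "mu_le A S L / mu_le A (free_group A) L \<le> 1 / 2 + e" for L
      using half ratio order_trans by metis
    then show ?thesis
      by (simp add: always_eventually)
  next
    case 2
    define \<epsilon> where "\<epsilon> = min e (2 / num_letters A)"
    have "0 < \<epsilon>" "\<epsilon> \<le> 2 / num_letters A"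
      using assms(4) num_letters_pos[OF assms(1) False] by (auto simp: \<epsilon>_def)
    from eventually_sum_layer_density_le[OF assms(1) 2 assms(2,3) this]
    show ?thesis
      by (rule eventually_mono) (auto simp: ratio \<epsilon>_def)
  qed
qed

theorem theorem1p1:
  fixes A :: "'a set" and S :: "('a \<times> bool) list set"
  assumes "finite A"
    and "S \<subseteq> free_group A"
    and "product_free S"
  shows "upper_density A S \<le> ereal (1/2)"
  unfolding upper_density_def
proof (rule ereal_le_epsilon2)
  fix e :: real
  assume "0 < e"
  then show "limsup (\<lambda>n. ereal (mu_le A S n / mu_le A (free_group A) n)) \<le> ereal (1 / 2) + ereal e"
    using eventually_density_ratio_le[OF assms]
    by (intro Limsup_bounded) (auto elim!: eventually_mono)
qed

end
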